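(* Let $\delta\in(0,1/3)$. For $\tau>n^{-\delta}$, $$ \int_{-\pi}^{\pi} e^{-in(\theta-\tau\sin(\theta))}\, e^{-2n\tau\sin^2(\theta/2)}\,\frac{d\theta}{2\pi} \;=\;\frac{e^{n(\ln(\tau)+1-\tau)}}{\sqrt{2\pi n}}\,\bigl(1+o(1)\bigr)+o\!\left(\frac1n\right), $$ as $n\to\infty$. *)

theory Defs
  imports "HOL-Analysis.Analysis" "HOL-Library.Landau_Symbols"
begin

definition lemma3_integrand :: "nat \<Rightarrow> real \<Rightarrow> real \<Rightarrow> complex" where
  "lemma3_integrand n \<tau> \<theta> =
     exp (- \<i> * of_real (real n * (\<theta> - \<tau> * sin \<theta>)))
     * of_real (exp (- 2 * real n * \<tau> * (sin (\<theta> / 2))\<^sup>2))"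

definition lemma3_I :: "nat \<Rightarrow> real \<Rightarrow> complex" where
  "lemma3_I n \<tau> = integral {-pi..pi} (lemma3_integrand n \<tau>) / of_real (2 * pi)"

definition lemma3_main :: "nat \<Rightarrow> real \<Rightarrow> real" where
  "lemma3_main n \<tau> = exp (real n * (ln \<tau> + 1 - \<tau>)) / sqrt (2 * pi * real n)"

end

theory Submission
  imports Defs "HOL-Complex_Analysis.Cauchy_Integral_Formula" "HOL-Real_Asymp.Real_Asymp"
begin

(* Since -2 n tau sin^2 (theta/2) = n tau (cos theta - 1), the integrand is
   e^(-n tau) exp (n tau e^(i theta)) e^(-i n theta), so the integral is e^(-n tau) times the n-th
   Taylor coefficient of exp (n tau z): by Cauchy's formula it equals the Poisson probability
   e^(-n tau) (n tau)^n / n! exactly. Stirling's formula n! ~ sqrt (2 pi n) (n/e)^n turns this into the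
   main term times 1 + o(1), with no additive error at all; the hypothesis on tau only guarantees tau > 0.
   Stirling's formula itself follows from the monotonicity of ln (n! e^n / n^(n + 1/2)) and of that
   quantity minus 1/(8n), which come from bounds on artanh, and Wallis' product, which identifies
   the limit. *)

lemma higher_deriv_exp_linear:
  "(deriv ^^ k) (\<lambda>u. exp (c * u)) = (\<lambda>u::complex. c ^ k * exp (c * u))"
proof (induction k)
  case (Suc k)
  have "deriv (\<lambda>u. c ^ k * exp (c * u)) u = c ^ Suc k * exp (c * u)" for u
    by (rule DERIV_imp_deriv) (auto intro!: derivative_eq_intros)
  then show ?case
    using Suc by auto
qed simp

lemma fourier_coefficient_exp_cis:
  fixes b :: complex
  shows "((\<lambda>t. exp (b * cis t) * cis (- (real n * t))) has_integral 2 * of_real pi * b ^ n / fact n) {-pi..pi}"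
proof -
  let ?g = "\<lambda>u. exp (- b * u)"
  have "((\<lambda>u. ?g u / (u - 0) ^ Suc n) has_contour_integral 2 * pi * \<i> / fact n * (deriv ^^ n) ?g 0)
          (circlepath 0 1)"
    by (rule Cauchy_has_contour_integral_higher_derivative_circlepath)
       (auto intro!: holomorphic_intros continuous_intros)
  then have circle: "((\<lambda>t. ?g (cis t) / cis t ^ Suc n * \<i> * cis t) has_integral 2 * pi * \<i> / fact n * (- b) ^ n)
               {0..2 * pi}"
    unfolding higher_deriv_exp_linear by (simp add: circlepath_def has_contour_integral_part_circlepath_iff)
  \<comment> \<open>\<open>cis (t + pi) = - cis t\<close> moves the parameter interval to \<open>[-pi, pi]\<close> and absorbs the sign of \<open>-b\<close>\<close>
  have shift: "?g (cis (t + pi)) / cis (t + pi) ^ Suc n * \<i> * cis (t + pi)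
      = \<i> * (-1) ^ n * (exp (b * cis t) * cis (- (real n * t)))" for t
  proof -
    have "cis (t + pi) = - cis t"
      by (simp add: cis_def complex_eq_iff)
    moreover have "cis (- (real n * t)) = inverse (cis t ^ n)"
      by (simp only: Complex.DeMoivre cis_inverse)
    ultimately show ?thesis
      by (simp add: field_simps power_minus')
  qed
  have shifted: "((\<lambda>t. \<i> * (-1) ^ n * (exp (b * cis t) * cis (- (real n * t)))) has_integral
                    2 * pi * \<i> / fact n * (- b) ^ n) {-pi..pi}"
    using has_integral_shift_real_ivl[OF circle, of pi] unfolding shift by simp
  have "(-1::complex) ^ n * (-1) ^ n = 1"
    by (simp flip: power_mult_distrib)
  then show ?thesis
    using has_integral_mult_left[OF shifted, of "- \<i> * (-1) ^ n"]
    by (simp add: power_minus[of b] algebra_simps)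
qed

lemma artanh_ge_self:
  fixes x :: real
  assumes "0 \<le> x" "x < 1"
  shows "x \<le> artanh x"
proof -
  have "(\<lambda>y. artanh y - y) 0 \<le> (\<lambda>y. artanh y - y) x"
  proof (rule DERIV_nonneg_imp_nondecreasing[OF \<open>0 \<le> x\<close>])
    fix y :: real
    assume "0 \<le> y" "y \<le> x"
    with assms have "DERIV (\<lambda>y. artanh y - y) y :> 1 / (1 - y\<^sup>2) - 1" and "y\<^sup>2 < 1"
      by (auto intro!: derivative_eq_intros simp: abs_square_less_1)
    then show "\<exists>d. DERIV (\<lambda>y. artanh y - y) y :> d \<and> 0 \<le> d"
      using \<open>0 \<le> y\<close> by (auto simp: field_simps)
  qed
  then show ?thesis
    by simp
qed

lemma artanh_le_self_plus_cube:
  fixes x :: real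
  assumes "0 \<le> x" "3 * x\<^sup>2 \<le> 1"
  shows "artanh x \<le> x + x ^ 3 / 2"
proof -
  have "(\<lambda>y. y + y ^ 3 / 2 - artanh y) 0 \<le> (\<lambda>y. y + y ^ 3 / 2 - artanh y) x"
  proof (rule DERIV_nonneg_imp_nondecreasing[OF \<open>0 \<le> x\<close>])
    fix y :: real
    assume "0 \<le> y" "y \<le> x"
    then have "3 * y\<^sup>2 \<le> 1"
      using assms power_mono[of y x 2] by linarith
    then have "y\<^sup>2 < 1"
      by linarith
    then have "DERIV (\<lambda>y. y + y ^ 3 / 2 - artanh y) y :> 1 + 3 * y\<^sup>2 / 2 - 1 / (1 - y\<^sup>2)"
      by (auto intro!: derivative_eq_intros simp: abs_square_less_1)
    moreover have "1 / (1 - y\<^sup>2) \<le> 1 + 3 * y\<^sup>2 / 2"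
    proof -
      have "(1 + 3 * y\<^sup>2 / 2) * (1 - y\<^sup>2) = 1 + y\<^sup>2 * (1 - 3 * y\<^sup>2) / 2"
        by (simp add: field_simps)
      also have "\<dots> \<ge> 1"
        using \<open>3 * y\<^sup>2 \<le> 1\<close> by simp
      finally have "1 \<le> (1 + 3 * y\<^sup>2 / 2) * (1 - y\<^sup>2)" .
      then show ?thesis
        using \<open>3 * y\<^sup>2 \<le> 1\<close> by (simp add: divide_le_eq)
    qed
    ultimately show "\<exists>d. DERIV (\<lambda>y. y + y ^ 3 / 2 - artanh y) y :> d \<and> 0 \<le> d"
      by auto
  qed
  then show ?thesis
    by simp
qed

definition stirling_ratio :: "nat \<Rightarrow> real" where
  "stirling_ratio n = fact n * exp (real n) / (sqrt (real n) * real n ^ n)"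

lemma ln_stirling_ratio:
  assumes "0 < n"
  shows "ln (stirling_ratio n) = ln (fact n) + real n - (real n + 1 / 2) * ln (real n)"
  using assms by (simp add: stirling_ratio_def ln_mult ln_div ln_realpow ln_sqrt algebra_simps)

lemma ln_stirling_ratio_diff:
  assumes "0 < n"
  shows "ln (stirling_ratio n) - ln (stirling_ratio (Suc n))
           = (2 * real n + 1) * artanh (1 / (2 * real n + 1)) - 1"
proof -
  have "1 + 1 / (2 * real n + 1) = 2 * (real n + 1) / (2 * real n + 1)"
       "1 - 1 / (2 * real n + 1) = 2 * real n / (2 * real n + 1)"
    by (simp_all add: field_simps)
  then have "(1 + 1 / (2 * real n + 1)) / (1 - 1 / (2 * real n + 1)) = (2 * (real n + 1)) / (2 * real n)"
    by simp
  also have "\<dots> = (real n + 1) / real n"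
    by (rule mult_divide_mult_cancel_left) simp
  finally have artanh_eq: "ln (real n + 1) - ln (real n) = 2 * artanh (1 / (2 * real n + 1))"
    using assms by (simp add: artanh_def ln_div)
  have "ln (fact (Suc n) :: real) = ln (real n + 1) + ln (fact n)"
    by (simp add: ln_mult add.commute)
  then have "ln (stirling_ratio n) - ln (stirling_ratio (Suc n))
               = (real n + 1 / 2) * (ln (real n + 1) - ln (real n)) - 1"
    using assms by (simp add: ln_stirling_ratio algebra_simps)
  then show ?thesis
    unfolding artanh_eq by (simp add: algebra_simps)
qed

lemma ln_stirling_ratio_Suc_le:
  assumes "0 < n"
  shows "ln (stirling_ratio (Suc n)) \<le> ln (stirling_ratio n)"
proof -
  let ?x = "1 / (2 * real n + 1)"
  have "?x \<le> artanh ?x"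
    by (rule artanh_ge_self) (use assms in \<open>auto simp: field_simps\<close>)
  then have "1 \<le> (2 * real n + 1) * artanh ?x"
    by (simp add: field_simps)
  then show ?thesis
    using ln_stirling_ratio_diff[OF assms] by linarith
qed

lemma ln_stirling_ratio_Suc_ge:
  assumes "0 < n"
  shows "ln (stirling_ratio n) - 1 / (8 * real n) \<le> ln (stirling_ratio (Suc n)) - 1 / (8 * real (Suc n))"
proof -
  define m where "m = 2 * real n + 1"
  have "3 \<le> m"
    using assms by (simp add: m_def)
  have "artanh (1 / m) \<le> 1 / m + (1 / m) ^ 3 / 2"
  proof (rule artanh_le_self_plus_cube)
    have "3 * 1 \<le> m * m"
      using \<open>3 \<le> m\<close> by (intro mult_mono) auto
    then have "3 \<le> m\<^sup>2"
      by (simp add: power2_eq_square)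
    then show "3 * (1 / m)\<^sup>2 \<le> 1"
      by (simp add: power_divide divide_le_eq)
  qed (use \<open>3 \<le> m\<close> in simp)
  then have "m * artanh (1 / m) - 1 \<le> 1 / (2 * m\<^sup>2)"
    using \<open>3 \<le> m\<close> by (simp add: field_simps power2_eq_square power3_eq_cube)
  also have "\<dots> \<le> 1 / (8 * real n) - 1 / (8 * real (Suc n))"
  proof -
    have "1 / (8 * real n) - 1 / (8 * real (Suc n)) = 1 / (8 * real n * (real n + 1))"
      using assms by (simp add: field_simps)
    moreover have "8 * real n * (real n + 1) \<le> 2 * m\<^sup>2"
      by (simp add: m_def power2_eq_square algebra_simps)
    ultimately show ?thesis
      using assms by (simp add: frac_le)
  qed
  finally show ?thesis
    using ln_stirling_ratio_diff[OF assms] unfolding m_def by linarith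
qed

lemma stirling_ratio_pos: "0 < n \<Longrightarrow> 0 < stirling_ratio n"
  by (simp add: stirling_ratio_def)

lemma stirling_ratio_convergent:
  obtains c where "stirling_ratio \<longlonglongrightarrow> c" "0 < c"
proof -
  define L where "L m = ln (stirling_ratio (Suc m))" for m
  have "decseq L"
    unfolding L_def by (rule decseq_SucI, rule ln_stirling_ratio_Suc_le) simp
  have inc: "incseq (\<lambda>m. L m - 1 / (8 * real (Suc m)))"
    unfolding L_def by (rule incseq_SucI, rule ln_stirling_ratio_Suc_ge) simp
  have "L 0 - 1 / 8 \<le> L m" for m
  proof -
    have "L 0 - 1 / 8 \<le> L m - 1 / (8 * real (Suc m))"
      using incseqD[OF inc, of 0 m] by simp
    also have "\<dots> \<le> L m"
      by simp
    finally show ?thesis .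
  qed
  then obtain C where "L \<longlonglongrightarrow> C"
    using decseq_convergent[OF \<open>decseq L\<close>, of "L 0 - 1 / 8"] by blast
  then have "(\<lambda>m. exp (L m)) \<longlonglongrightarrow> exp C"
    by (rule tendsto_exp)
  then have "(\<lambda>m. stirling_ratio (Suc m)) \<longlonglongrightarrow> exp C"
    by (simp add: L_def stirling_ratio_pos)
  then show ?thesis
    using that[of "exp C"] LIMSEQ_imp_Suc[of stirling_ratio] by simp
qed

lemma wallis_partial_product:
  "(\<Prod>k=1..n. 4 * real k ^ 2 / (4 * real k ^ 2 - 1)) = (2 ^ n * fact n) ^ 4 / (fact (2 * n) ^ 2 * (2 * real n + 1))"
proof (induction n)
  case (Suc n)
  define N where "N = real n"
  define A :: real where "A = 2 ^ n * fact n"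
  define B :: real where "B = fact (2 * n)"
  have nonzero: "2 * N + 1 \<noteq> 0" "2 * N + 3 \<noteq> 0" "N + 1 \<noteq> 0" "B \<noteq> 0"
    by (simp_all add: N_def B_def add_nonneg_eq_0_iff)
  have "(\<Prod>k=1..Suc n. 4 * real k ^ 2 / (4 * real k ^ 2 - 1))
          = A ^ 4 / (B\<^sup>2 * (2 * N + 1)) * (4 * (N + 1)\<^sup>2 / ((2 * N + 1) * (2 * N + 3)))"
  proof -
    have "4 * real (Suc n) ^ 2 - 1 = (2 * N + 1) * (2 * N + 3)" "real (Suc n) = N + 1"
      by (simp_all add: N_def power2_eq_square algebra_simps)
    then show ?thesis
      using Suc.IH by (simp only: prod.cl_ivl_Suc A_def B_def N_def) simp
  qed
  also have "\<dots> = (2 * (N + 1) * A) ^ 4 / ((2 * (N + 1) * (2 * N + 1) * B)\<^sup>2 * (2 * N + 3))"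
    using nonzero by (simp add: divide_simps) (simp add: algebra_simps power2_eq_square power4_eq_xxxx)
  also have "\<dots> = (2 ^ Suc n * fact (Suc n)) ^ 4 / (fact (2 * Suc n) ^ 2 * (2 * real (Suc n) + 1))"
  proof -
    have "2 ^ Suc n * fact (Suc n) = 2 * (N + 1) * A"
      by (simp add: A_def N_def algebra_simps)
    moreover have "fact (2 * Suc n) = 2 * (N + 1) * (2 * N + 1) * B"
      by (simp add: B_def N_def algebra_simps)
    moreover have "2 * real (Suc n) + 1 = 2 * N + 3"
      by (simp add: N_def)
    ultimately show ?thesis
      by simp
  qed
  finally show ?case .
qed simp

lemma wallis_partial_product_stirling_ratio:
  assumes "0 < n"
  shows "(\<Prod>k=1..n. 4 * real k ^ 2 / (4 * real k ^ 2 - 1))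
           = stirling_ratio n ^ 4 / stirling_ratio (2 * n) ^ 2 * (real n / (2 * (2 * real n + 1)))"
proof -
  define N where "N = real n"
  define P where "P = N ^ n"
  define E where "E = exp N"
  define F :: real where "F = fact n"
  define G :: real where "G = fact (2 * n)"
  define Q :: real where "Q = 2 ^ n"
  have nonzero: "N \<noteq> 0" "P \<noteq> 0" "E \<noteq> 0" "G \<noteq> 0" "Q \<noteq> 0" "2 * N + 1 \<noteq> 0"
    using assms by (simp_all add: N_def P_def E_def G_def Q_def add_nonneg_eq_0_iff)
  have "sqrt N ^ 4 = N\<^sup>2"
    using power_mult[of "sqrt N" 2 2] by (simp add: N_def)
  then have ratio4: "stirling_ratio n ^ 4 = F ^ 4 * E ^ 4 / (N\<^sup>2 * P ^ 4)"
    by (simp add: stirling_ratio_def F_def E_def N_def P_def power_divide power_mult_distrib)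
  have ratio2: "stirling_ratio (2 * n) ^ 2 = G\<^sup>2 * E ^ 4 / (2 * N * Q ^ 4 * P ^ 4)"
  proof -
    have "exp (real (2 * n)) = E\<^sup>2"
      by (simp add: E_def N_def flip: exp_of_nat_mult)
    moreover have "real (2 * n) ^ (2 * n) = (Q * P)\<^sup>2"
      by (simp add: N_def P_def Q_def power_even_eq power_mult_distrib)
    ultimately show ?thesis
      by (simp add: stirling_ratio_def G_def N_def power_divide power_mult_distrib flip: power_mult)
  qed
  show ?thesis
    unfolding wallis_partial_product ratio4 ratio2 F_def[symmetric] G_def[symmetric] N_def[symmetric] Q_def[symmetric]
    using nonzero by (simp add: divide_simps) (simp add: algebra_simps power2_eq_square power4_eq_xxxx)
qed

theorem stirling_ratio_tendsto: "stirling_ratio \<longlonglongrightarrow> sqrt (2 * pi)"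
proof -
  obtain c where c: "stirling_ratio \<longlonglongrightarrow> c" "0 < c"
    using stirling_ratio_convergent by blast
  have "(\<lambda>n. stirling_ratio (2 * n)) \<longlonglongrightarrow> c"
    using LIMSEQ_subseq_LIMSEQ[OF c(1), of "\<lambda>n. 2 * n"] by (simp add: strict_mono_def o_def)
  then have "(\<lambda>n. stirling_ratio n ^ 4 / stirling_ratio (2 * n) ^ 2) \<longlonglongrightarrow> c ^ 4 / c ^ 2"
    using c by (intro tendsto_intros) auto
  moreover have "(\<lambda>n. real n / (2 * (2 * real n + 1))) \<longlonglongrightarrow> 1 / 4"
    by real_asymp
  ultimately have "(\<lambda>n. stirling_ratio n ^ 4 / stirling_ratio (2 * n) ^ 2 * (real n / (2 * (2 * real n + 1))))
                     \<longlonglongrightarrow> c ^ 4 / c ^ 2 * (1 / 4)"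
    by (rule tendsto_mult)
  moreover have "eventually (\<lambda>n. stirling_ratio n ^ 4 / stirling_ratio (2 * n) ^ 2 * (real n / (2 * (2 * real n + 1)))
                   = (\<Prod>k=1..n. 4 * real k ^ 2 / (4 * real k ^ 2 - 1))) sequentially"
    using eventually_gt_at_top[of 0] by eventually_elim (rule wallis_partial_product_stirling_ratio[symmetric])
  ultimately have "(\<lambda>n. \<Prod>k=1..n. 4 * real k ^ 2 / (4 * real k ^ 2 - 1)) \<longlonglongrightarrow> c ^ 4 / c ^ 2 * (1 / 4)"
    by (rule Lim_transform_eventually)
  then have "c ^ 4 / c ^ 2 * (1 / 4) = pi / 2"
    using wallis LIMSEQ_unique by blast
  then have "c\<^sup>2 = 2 * pi"
    using c(2) by (simp add: power2_eq_square power4_eq_xxxx field_simps)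
  then have "c = sqrt (2 * pi)"
    using c(2) by (simp add: real_sqrt_unique)
  with c(1) show ?thesis
    by simp
qed

lemma lemma3_integrand_eq:
  "lemma3_integrand n \<tau> \<theta> =
     of_real (exp (- (real n * \<tau>))) * (exp (of_real (real n * \<tau>) * cis \<theta>) * cis (- (real n * \<theta>)))"
proof -
  have cos_half: "cos \<theta> = 1 - 2 * (sin (\<theta> / 2))\<^sup>2"
    using cos_double_sin[of "\<theta> / 2"] by (simp only: mult_2 field_sum_of_halves)
  have damping: "- 2 * real n * \<tau> * (sin (\<theta> / 2))\<^sup>2 = - (real n * \<tau>) + real n * \<tau> * cos \<theta>"
    unfolding cos_half by (simp add: algebra_simps)
  have exponent: "- \<i> * of_real (real n * (\<theta> - \<tau> * sin \<theta>)) + of_real (- 2 * real n * \<tau> * (sin (\<theta> / 2))\<^sup>2)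
      = of_real (- (real n * \<tau>)) + of_real (real n * \<tau>) * cis \<theta> + \<i> * of_real (- (real n * \<theta>))"
    unfolding damping by (simp add: complex_eq_iff algebra_simps)
  have "lemma3_integrand n \<tau> \<theta>
      = exp (- \<i> * of_real (real n * (\<theta> - \<tau> * sin \<theta>)) + of_real (- 2 * real n * \<tau> * (sin (\<theta> / 2))\<^sup>2))"
    unfolding lemma3_integrand_def by (simp only: exp_add exp_of_real)
  also have "\<dots> = exp (of_real (- (real n * \<tau>)) + of_real (real n * \<tau>) * cis \<theta> + \<i> * of_real (- (real n * \<theta>)))"
    unfolding exponent ..
  also have "\<dots> = of_real (exp (- (real n * \<tau>))) * (exp (of_real (real n * \<tau>) * cis \<theta>) * cis (- (real n * \<theta>)))"
    by (simp only: exp_add exp_of_real cis_conv_exp mult.assoc)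
  finally show ?thesis .
qed

lemma lemma3_I_eq_poisson:
  "lemma3_I n \<tau> = of_real (exp (- (real n * \<tau>)) * (real n * \<tau>) ^ n / fact n)"
proof -
  have "(lemma3_integrand n \<tau> has_integral
          (of_real (exp (- (real n * \<tau>))) :: complex) * (2 * of_real pi * of_real (real n * \<tau>) ^ n / fact n))
          {-pi..pi}"
    unfolding lemma3_integrand_eq[abs_def] by (intro has_integral_mult_right fourier_coefficient_exp_cis)
  then show ?thesis
    unfolding lemma3_I_def by (simp add: integral_unique field_simps)
qed

lemma lemma3_I_eq_lemma3_main:
  assumes "0 < n" "0 < \<tau>"
  shows "lemma3_I n \<tau> = of_real (lemma3_main n \<tau> * (sqrt (2 * pi) / stirling_ratio n))"
proof -
  have "exp (real n * (ln \<tau> + 1 - \<tau>)) = exp (real n * ln \<tau>) * exp (real n) * exp (- (real n * \<tau>))"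
    by (simp add: algebra_simps flip: exp_add)
  also have "exp (real n * ln \<tau>) = \<tau> ^ n"
    using assms(2) by (simp add: exp_of_nat_mult)
  finally have "exp (real n * (ln \<tau> + 1 - \<tau>)) = \<tau> ^ n * exp (real n) * exp (- (real n * \<tau>))" .
  then have "lemma3_main n \<tau> * (sqrt (2 * pi) / stirling_ratio n) = exp (- (real n * \<tau>)) * (real n * \<tau>) ^ n / fact n"
    using assms by (simp add: lemma3_main_def stirling_ratio_def real_sqrt_mult field_simps power_mult_distrib)
  then show ?thesis
    by (simp only: lemma3_I_eq_poisson)
qed

theorem lemma3:
  fixes \<delta> :: real and \<tau> :: "nat \<Rightarrow> real"
  assumes "0 < \<delta>" and "\<delta> < 1/3"
    and "eventually (\<lambda>n. \<tau> n > real n powr (- \<delta>)) at_top"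
  shows "\<exists>(e :: nat \<Rightarrow> complex) (r :: nat \<Rightarrow> complex).
           e \<longlonglongrightarrow> 0 \<and> r \<in> o(\<lambda>n. 1 / of_nat n) \<and>
           eventually (\<lambda>n. lemma3_I n (\<tau> n) =
              of_real (lemma3_main n (\<tau> n)) * (1 + e n) + r n) at_top"
proof (intro exI conjI)
  have "(\<lambda>n. sqrt (2 * pi) / stirling_ratio n - 1) \<longlonglongrightarrow> sqrt (2 * pi) / sqrt (2 * pi) - 1"
    by (intro tendsto_intros stirling_ratio_tendsto) simp
  then have "(\<lambda>n. sqrt (2 * pi) / stirling_ratio n - 1) \<longlonglongrightarrow> 0"
    by simp
  from tendsto_of_real[OF this]
  show "(\<lambda>n. of_real (sqrt (2 * pi) / stirling_ratio n - 1)) \<longlonglongrightarrow> (0 :: complex)"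
    unfolding of_real_0 .
  show "(\<lambda>n. 0 :: complex) \<in> o(\<lambda>n. 1 / of_nat n)"
    by simp
  show "\<forall>\<^sub>F n in at_top. lemma3_I n (\<tau> n)
          = of_real (lemma3_main n (\<tau> n)) * (1 + of_real (sqrt (2 * pi) / stirling_ratio n - 1)) + 0"
    using assms(3) eventually_gt_at_top[of 0]
  proof eventually_elim
    case (elim n)
    have "0 < real n powr (- \<delta>)"
      using elim(2) by simp
    then have "0 < \<tau> n"
      using elim(1) by linarith
    with elim(2) show ?case
      by (simp add: lemma3_I_eq_lemma3_main)
  qed
qed

end
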